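(* For every integer $m \geq 3$, $\gamma_{b,2}(P_m \square C_3) = \left\lceil \frac{2m}{3} \right\rceil$.
   Context: For a graph $G$, a $2$-limited broadcast is a function $f: V(G) \to \{0,1,2\}$. A vertex $u$ hears the broadcast from $v$ if $f(v) > 0$ and $d(u,v) \leq f(v)$, where $d$ is the distance in $G$. The broadcast $f$ is dominating if every vertex of $G$ hears the broadcast from some vertex. The cost of $f$ is $\sum_{v \in V(G)} f(v)$. The $2$-limited broadcast domination number $\gamma_{b,2}(G)$ is the minimum cost of a $2$-limited dominating broadcast on $G$. $C_n$ denotes the cycle on $n$ vertices, $P_m$ the path on $m$ vertices, and $\square$ the Cartesian product of graphs. *)

theory Defs
  imports Complex_Main
begin

text \<open>A graph is given by a vertex set V and a symmetric adjacency relation E.\<close>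

definition walk :: "'a set \<Rightarrow> ('a \<Rightarrow> 'a \<Rightarrow> bool) \<Rightarrow> 'a list \<Rightarrow> bool" where
  "walk V E xs \<longleftrightarrow> xs \<noteq> [] \<and> set xs \<subseteq> V \<and> (\<forall>i. Suc i < length xs \<longrightarrow> E (xs ! i) (xs ! Suc i))"

text \<open>Graph distance: least length of a walk from u to v (all graphs considered are connected).\<close>
definition gdist :: "'a set \<Rightarrow> ('a \<Rightarrow> 'a \<Rightarrow> bool) \<Rightarrow> 'a \<Rightarrow> 'a \<Rightarrow> nat" where
  "gdist V E u v = (LEAST n. \<exists>xs. walk V E xs \<and> hd xs = u \<and> last xs = v \<and> length xs = Suc n)"

definition hears :: "'a set \<Rightarrow> ('a \<Rightarrow> 'a \<Rightarrow> bool) \<Rightarrow> ('a \<Rightarrow> nat) \<Rightarrow> 'a \<Rightarrow> 'a \<Rightarrow> bool" where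
  "hears V E f u v \<longleftrightarrow> f v > 0 \<and> gdist V E u v \<le> f v"

definition dominating_2lb :: "'a set \<Rightarrow> ('a \<Rightarrow> 'a \<Rightarrow> bool) \<Rightarrow> ('a \<Rightarrow> nat) \<Rightarrow> bool" where
  "dominating_2lb V E f \<longleftrightarrow> (\<forall>v\<in>V. f v \<le> 2) \<and> (\<forall>u\<in>V. \<exists>v\<in>V. hears V E f u v)"

definition bcost :: "'a set \<Rightarrow> ('a \<Rightarrow> nat) \<Rightarrow> nat" where
  "bcost V f = (\<Sum>v\<in>V. f v)"

definition gamma_b2 :: "'a set \<Rightarrow> ('a \<Rightarrow> 'a \<Rightarrow> bool) \<Rightarrow> nat" where
  "gamma_b2 V E = (LEAST c. \<exists>f. dominating_2lb V E f \<and> bcost V f = c)"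

definition path_V :: "nat \<Rightarrow> nat set" where "path_V m = {0..<m}"
definition path_E :: "nat \<Rightarrow> nat \<Rightarrow> bool" where "path_E i j \<longleftrightarrow> j = i + 1 \<or> i = j + 1"
definition cycle_V :: "nat \<Rightarrow> nat set" where "cycle_V n = {0..<n}"
definition cycle_E :: "nat \<Rightarrow> nat \<Rightarrow> nat \<Rightarrow> bool" where
  "cycle_E n i j \<longleftrightarrow> i < n \<and> j < n \<and> (j = (i + 1) mod n \<or> i = (j + 1) mod n)"

definition cart_V :: "'a set \<Rightarrow> 'b set \<Rightarrow> ('a \<times> 'b) set" where "cart_V V1 V2 = V1 \<times> V2"
definition cart_E :: "('a \<Rightarrow> 'a \<Rightarrow> bool) \<Rightarrow> ('b \<Rightarrow> 'b \<Rightarrow> bool) \<Rightarrow> 'a \<times> 'b \<Rightarrow> 'a \<times> 'b \<Rightarrow> bool" where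
  "cart_E E1 E2 x y \<longleftrightarrow> (fst x = fst y \<and> E2 (snd x) (snd y)) \<or> (snd x = snd y \<and> E1 (fst x) (fst y))"

end

theory Submission
  imports Defs
begin

(*
  Lower bound: a discharging argument over the columns {c} x C_3 (note that C_3 is complete).
  A broadcast of strength 1 hears its own column entirely, one of strength 2 the three columns
  around it; call these the owners of the columns. In a column without owner every row has to
  hear, within that row, a strength-1 broadcast from an adjacent column or a strength-2 broadcast
  from two columns away. Each owned column keeps charge 1 from its owners, and each unowned
  column collects a quarter of every strength-1 broadcast next to it together with the surplus
  ownership of an adjacent column (halved when the column beyond is unowned too); this gives every
  column charge at least 1 while the total charge is at most 3/2 times the cost.
  Upper bound: strength-2 broadcasts in one row at the columns congruent to 1 mod 3, plus one
  strength-1 broadcast at the last column when m mod 3 = 1.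
*)

lemma walk_Cons:
  "walk V E (x # xs) \<longleftrightarrow> x \<in> V \<and> (xs = [] \<or> E x (hd xs) \<and> walk V E xs)"
  by (cases xs) (auto simp: walk_def nth_Cons less_Suc_eq_0_disj split: nat.splits)

lemma walk_hd_last_bound:
  assumes zero: "\<And>x. d x x = 0"
    and triangle: "\<And>x y z. d x z \<le> d x y + d y z"
    and edge: "\<And>x y. E x y \<Longrightarrow> d x y \<le> 1"
    and "walk V E xs"
  shows "d (hd xs) (last xs) \<le> length xs - 1"
  using \<open>walk V E xs\<close>
proof (induction xs)
  case (Cons x xs)
  show ?case
  proof (cases xs)
    case Nil
    with zero show ?thesis by simp
  next
    case (Cons y ys)
    then have "E x (hd xs)" "walk V E xs" using Cons.prems by (auto simp: walk_Cons)
    then have "d x (last xs) \<le> 1 + (length xs - 1)"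
      using triangle[of x "last xs" "hd xs"] edge Cons.IH by fastforce
    then show ?thesis using Cons by simp
  qed
qed (simp add: walk_def)

lemma gdist_eqI:
  assumes lower: "\<And>xs. walk V E xs \<Longrightarrow> d (hd xs) (last xs) \<le> length xs - 1"
    and realised: "walk V E xs" "hd xs = u" "last xs = v" "length xs = Suc (d u v)"
  shows "gdist V E u v = d u v"
  unfolding gdist_def
proof (rule Least_equality)
  show "\<exists>xs. walk V E xs \<and> hd xs = u \<and> last xs = v \<and> length xs = Suc (d u v)"
    using realised by blast
qed (use lower in fastforce)

lemma gamma_b2_le: "dominating_2lb V E f \<Longrightarrow> gamma_b2 V E \<le> bcost V f"
  unfolding gamma_b2_def by (rule Least_le) blast

lemma gamma_b2_attained:
  "dominating_2lb V E f \<Longrightarrow> \<exists>g. dominating_2lb V E g \<and> bcost V g = gamma_b2 V E"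
  unfolding gamma_b2_def by (rule LeastI) blast

abbreviation prism_V :: "nat \<Rightarrow> (nat \<times> nat) set" where
  "prism_V m \<equiv> cart_V (path_V m) (cycle_V 3)"

abbreviation prism_E :: "nat \<times> nat \<Rightarrow> nat \<times> nat \<Rightarrow> bool" where
  "prism_E \<equiv> cart_E path_E (cycle_E 3)"

lemma prism_V_eq: "prism_V m = {0..<m} \<times> {0..<3}"
  by (simp add: cart_V_def path_V_def cycle_V_def)

lemma cycle_E_3_iff: "cycle_E 3 i j \<longleftrightarrow> i < 3 \<and> j < 3 \<and> i \<noteq> j"
proof -
  have "i < 3 \<Longrightarrow> i = 0 \<or> i = 1 \<or> i = 2" "j < 3 \<Longrightarrow> j = 0 \<or> j = 1 \<or> j = 2"
    by auto
  then show ?thesis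
    unfolding cycle_E_def by auto
qed

lemma prism_E_iff:
  "prism_E (a, r) (b, s) \<longleftrightarrow>
     a = b \<and> r < 3 \<and> s < 3 \<and> r \<noteq> s \<or> r = s \<and> (b = a + 1 \<or> a = b + 1)"
  by (auto simp: cart_E_def cycle_E_3_iff path_E_def)

definition prism_dist :: "nat \<times> nat \<Rightarrow> nat \<times> nat \<Rightarrow> nat" where
  "prism_dist u v = nat \<bar>int (fst u) - int (fst v)\<bar> + of_bool (snd u \<noteq> snd v)"

lemma walk_along_row:
  assumes "a < m" "b < m" "r < 3"
  shows "walk (prism_V m) prism_E
           (map (\<lambda>i. (if a \<le> b then a + i else a - i, r)) [0..<Suc (nat \<bar>int a - int b\<bar>)])"
  using assms unfolding walk_def prism_V_eq by (auto simp: prism_E_iff simp del: upt_Suc)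

lemma gdist_prism:
  assumes u: "u \<in> prism_V m" and v: "v \<in> prism_V m"
  shows "gdist (prism_V m) prism_E u v = prism_dist u v"
proof -
  obtain a r b s where uv: "u = (a, r)" "v = (b, s)" by (cases u, cases v)
  then have bounds: "a < m" "b < m" "r < 3" "s < 3" using u v by (auto simp: prism_V_eq)
  define row where "row = map (\<lambda>i. (if a \<le> b then a + i else a - i, s)) [0..<Suc (nat \<bar>int a - int b\<bar>)]"
  have row: "walk (prism_V m) prism_E row" "hd row = (a, s)" "last row = (b, s)"
    using walk_along_row[OF bounds(1,2,4)] by (auto simp: row_def hd_map last_map simp del: upt_Suc)
  have lower: "prism_dist (hd xs) (last xs) \<le> length xs - 1" if "walk (prism_V m) prism_E xs" for xs
    by (rule walk_hd_last_bound[OF _ _ _ that]) (auto simp: prism_dist_def prism_E_iff)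
  show ?thesis
  proof (cases "r = s")
    case True
    show ?thesis
      unfolding uv True by (rule gdist_eqI[OF lower row]) (simp_all add: prism_dist_def row_def)
  next
    case False
    have detour: "walk (prism_V m) prism_E ((a, r) # row)"
      using row bounds False by (auto simp: walk_Cons prism_V_eq prism_E_iff row_def)
    show ?thesis
      unfolding uv
      by (rule gdist_eqI[OF lower detour]) (use False row in \<open>simp_all add: prism_dist_def row_def\<close>)
  qed
qed

lemma bcost_prism: "bcost (prism_V m) f = (\<Sum>c<m. \<Sum>r<3. f (c, r))"
  by (simp add: bcost_def prism_V_eq sum.cartesian_product atLeast0LessThan)

lemma sum_lessThan_shift_pred:
  fixes g :: "int \<Rightarrow> 'a :: comm_monoid_add"
  shows "(\<Sum>c<m. g (int c - 1)) + g (int m - 1) = g (-1) + (\<Sum>c<m. g (int c))"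
proof (induction m)
  case (Suc m)
  have "(\<Sum>c<Suc m. g (int c - 1)) + g (int (Suc m) - 1) = ((\<Sum>c<m. g (int c - 1)) + g (int m - 1)) + g (int m)"
    by (simp add: ac_simps)
  also have "\<dots> = (g (-1) + (\<Sum>c<m. g (int c))) + g (int m)"
    by (simp only: Suc.IH)
  finally show ?case
    by (simp add: ac_simps)
qed simp

lemma sum_lessThan_shift_succ:
  fixes g :: "int \<Rightarrow> 'a :: comm_monoid_add"
  shows "(\<Sum>c<m. g (int c + 1)) + g 0 = (\<Sum>c<m. g (int c)) + g (int m)"
proof (induction m)
  case (Suc m)
  have "(\<Sum>c<Suc m. g (int c + 1)) + g 0 = ((\<Sum>c<m. g (int c + 1)) + g 0) + g (int m + 1)"
    by (simp add: ac_simps)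
  also have "\<dots> = ((\<Sum>c<m. g (int c)) + g (int m)) + g (int m + 1)"
    by (simp only: Suc.IH)
  finally show ?case
    by (simp add: ac_simps)
qed simp

lemma sum_lessThan_shifted_le:
  fixes g :: "int \<Rightarrow> real"
  assumes "\<And>c. 0 \<le> g c" "g (-1) = 0" "g (int m) = 0"
  shows "(\<Sum>c<m. g (int c - 1)) \<le> (\<Sum>c<m. g (int c))"
    and "(\<Sum>c<m. g (int c + 1)) \<le> (\<Sum>c<m. g (int c))"
  using sum_lessThan_shift_pred[of g m] sum_lessThan_shift_succ[of g m]
    assms(1)[of "int m - 1"] assms(1)[of 0] assms(2,3)
  by linarith+

(*
  Columns c of P_M x K_R, rows r in R; F c r is the broadcast strength at (c, r), and columns
  outside [0, M) are empty. The last assumption is what domination says about a column that no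
  broadcast hears entirely.
*)
locale column_broadcast =
  fixes R :: "'r set" and M :: nat and F :: "int \<Rightarrow> 'r \<Rightarrow> nat"
  assumes card_R: "3 \<le> card R"
    and F_le_2: "r \<in> R \<Longrightarrow> F c r \<le> 2"
    and F_outside: "c < 0 \<or> int M \<le> c \<Longrightarrow> F c r = 0"
    and unowned_covered: "\<lbrakk>0 \<le> c; c < int M;
        \<forall>r'\<in>R. F c r' = 0 \<and> F (c - 1) r' \<noteq> 2 \<and> F (c + 1) r' \<noteq> 2; r \<in> R\<rbrakk>
      \<Longrightarrow> F (c - 1) r = 1 \<or> F (c + 1) r = 1 \<or> F (c - 2) r = 2 \<or> F (c + 2) r = 2"
begin

lemma finite_R: "finite R"
  using card_R card.infinite by fastforce

definition ones :: "int \<Rightarrow> nat" where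
  "ones c = (\<Sum>r\<in>R. of_bool (F c r = 1))"

definition twos :: "int \<Rightarrow> nat" where
  "twos c = (\<Sum>r\<in>R. of_bool (F c r = 2))"

definition owners :: "int \<Rightarrow> nat" where
  "owners c = ones c + twos c + twos (c - 1) + twos (c + 1)"

definition unowned :: "int \<Rightarrow> bool" where
  "unowned c \<longleftrightarrow> 0 \<le> c \<and> c < int M \<and> owners c = 0"

definition surplus :: "int \<Rightarrow> real" where
  "surplus c = (if 0 \<le> c \<and> c < int M then real (owners c - 1) else 0)"

(* The unowned column c takes the surplus of its neighbour d, sharing it with the column
   2 * d - c beyond d when that one is unowned too. *)
definition claim :: "int \<Rightarrow> int \<Rightarrow> real" where
  "claim c d = (if unowned c then surplus d / (if unowned (2 * d - c) then 2 else 1) else 0)"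

lemma ones_twos_outside: "c < 0 \<or> int M \<le> c \<Longrightarrow> ones c = 0 \<and> twos c = 0"
  by (simp add: ones_def twos_def F_outside)

lemma claim_nonneg: "0 \<le> claim c d"
  by (simp add: claim_def surplus_def)

lemma claims_le_surplus: "claim (d - 1) d + claim (d + 1) d \<le> surplus d"
  by (auto simp: claim_def surplus_def)

lemma owners_ge_ones_twos: "e = d - 1 \<or> e = d + 1 \<Longrightarrow> ones d + twos e \<le> owners d"
  by (auto simp: owners_def)

lemma unowned_rows:
  assumes "unowned c" "r \<in> R"
  shows "F c r = 0 \<and> F (c - 1) r \<noteq> 2 \<and> F (c + 1) r \<noteq> 2"
proof -
  have "\<forall>r\<in>R. F c r \<noteq> 1 \<and> F c r \<noteq> 2 \<and> F (c - 1) r \<noteq> 2 \<and> F (c + 1) r \<noteq> 2"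
    using assms(1) finite_R by (simp add: unowned_def owners_def ones_def twos_def) blast
  then show ?thesis
    using assms(2) F_le_2[of r c] by auto
qed

lemma owned_if_twos: "0 < twos e \<Longrightarrow> \<not> unowned e"
  by (simp add: unowned_def owners_def)

lemma one_side_charge:
  assumes c: "unowned c" and d: "d = c - 1 \<or> d = c + 1"
    and enough: "2 \<le> ones d + twos (2 * d - c)"
  shows "1 \<le> claim c d + real (ones d) / 4"
proof -
  have "0 \<le> d \<and> d < int M"
  proof (rule ccontr)
    assume "\<not> (0 \<le> d \<and> d < int M)"
    then have "ones d = 0" "twos (2 * d - c) = 0"
      using ones_twos_outside[of d] ones_twos_outside[of "2 * d - c"] c d by (auto simp: unowned_def)
    with enough show False by simp
  qed
  then have surplus: "real (ones d) + real (twos (2 * d - c)) - 1 \<le> surplus d"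
    using owners_ge_ones_twos[of "2 * d - c" d] d enough by (auto simp: surplus_def)
  show ?thesis
  proof (cases "unowned (2 * d - c)")
    case True
    then have "twos (2 * d - c) = 0" "2 \<le> real (ones d)"
      using owned_if_twos[of "2 * d - c"] enough by fastforce+
    then show ?thesis
      using c surplus by (simp add: claim_def)
  next
    case False
    then show ?thesis
      using c surplus enough by (simp add: claim_def)
  qed
qed

lemma unowned_column_charge:
  assumes c: "unowned c"
  shows "1 \<le> claim c (c - 1) + claim c (c + 1) + real (ones (c - 1)) / 4 + real (ones (c + 1)) / 4"
proof -
  have covered: "F (c - 1) r = 1 \<or> F (c + 1) r = 1 \<or> F (c - 2) r = 2 \<or> F (c + 2) r = 2" if "r \<in> R" for r
    using unowned_covered[OF _ _ _ that] unowned_rows[OF c] c by (auto simp: unowned_def)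
  have "card R = (\<Sum>r\<in>R. 1::nat)"
    by simp
  also have "\<dots> \<le> (\<Sum>r\<in>R. of_bool (F (c - 1) r = 1) + of_bool (F (c - 2) r = 2)
                      + (of_bool (F (c + 1) r = 1) + of_bool (F (c + 2) r = 2)))"
    by (rule sum_mono) (use covered in auto)
  also have "\<dots> = ones (c - 1) + twos (c - 2) + (ones (c + 1) + twos (c + 2))"
    by (simp add: ones_def twos_def sum.distrib)
  finally have "2 \<le> ones (c - 1) + twos (2 * (c - 1) - c) \<or> 2 \<le> ones (c + 1) + twos (2 * (c + 1) - c)"
    using card_R by (auto simp: algebra_simps)
  then show ?thesis
  proof
    assume "2 \<le> ones (c - 1) + twos (2 * (c - 1) - c)"
    then have "1 \<le> claim c (c - 1) + real (ones (c - 1)) / 4"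
      using one_side_charge[OF c] by simp
    then show ?thesis
      using claim_nonneg[of c "c + 1"] of_nat_0_le_iff[of "ones (c + 1)", where 'a = real] by linarith
  next
    assume "2 \<le> ones (c + 1) + twos (2 * (c + 1) - c)"
    then have "1 \<le> claim c (c + 1) + real (ones (c + 1)) / 4"
      using one_side_charge[OF c] by simp
    then show ?thesis
      using claim_nonneg[of c "c - 1"] of_nat_0_le_iff[of "ones (c - 1)", where 'a = real] by linarith
  qed
qed

lemma column_charge:
  assumes "0 \<le> c" "c < int M"
  shows "1 \<le> real (owners c) - surplus c + claim c (c - 1) + claim c (c + 1)
              + real (ones (c - 1)) / 4 + real (ones (c + 1)) / 4"
proof (cases "unowned c")
  case True
  then have "owners c = 0" "surplus c = 0"
    by (simp_all add: unowned_def surplus_def)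
  with unowned_column_charge[OF True] show ?thesis
    by simp
next
  case False
  then have "real (owners c) - surplus c = 1"
    using assms by (simp add: unowned_def surplus_def)
  then show ?thesis
    using claim_nonneg[of c] by (simp add: add_nonneg_nonneg)
qed

lemma cost_lower_bound: "2 * M \<le> 3 * (\<Sum>c<M. ones (int c) + 2 * twos (int c))"
proof -
  let ?S = "\<lambda>g. \<Sum>c<M. g (int c) :: real"
  have "real M = ?S (\<lambda>_. 1)"
    by simp
  also have "\<dots> \<le> ?S (\<lambda>c. real (owners c) - surplus c + claim c (c - 1) + claim c (c + 1)
                        + real (ones (c - 1)) / 4 + real (ones (c + 1)) / 4)"
    by (rule sum_mono) (simp add: column_charge)
  also have "\<dots> = ?S (\<lambda>c. real (owners c)) - ?S surplus
                 + ?S (\<lambda>c. claim c (c - 1)) + ?S (\<lambda>c. claim c (c + 1))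
                 + ?S (\<lambda>c. real (ones (c - 1))) / 4 + ?S (\<lambda>c. real (ones (c + 1))) / 4"
    by (simp add: sum.distrib sum_subtractf sum_divide_distrib[symmetric])
  finally have charge: "real M \<le> \<dots>" .
  have owners: "?S (\<lambda>c. real (owners c)) = ?S (\<lambda>c. real (ones c)) + ?S (\<lambda>c. real (twos c))
                  + ?S (\<lambda>c. real (twos (c - 1))) + ?S (\<lambda>c. real (twos (c + 1)))"
    by (simp add: owners_def sum.distrib)
  have ones: "?S (\<lambda>c. real (ones (c - 1))) \<le> ?S (\<lambda>c. real (ones c))"
             "?S (\<lambda>c. real (ones (c + 1))) \<le> ?S (\<lambda>c. real (ones c))"
    by (rule sum_lessThan_shifted_le; simp add: ones_twos_outside)+
  have twos: "?S (\<lambda>c. real (twos (c - 1))) \<le> ?S (\<lambda>c. real (twos c))"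
             "?S (\<lambda>c. real (twos (c + 1))) \<le> ?S (\<lambda>c. real (twos c))"
    by (rule sum_lessThan_shifted_le; simp add: ones_twos_outside)+
  have "?S (\<lambda>c. claim c (c - 1)) \<le> ?S (\<lambda>d. claim (d + 1) d)"
    using sum_lessThan_shifted_le(1)[of "\<lambda>d. claim (d + 1) d" M]
    by (simp add: claim_nonneg claim_def surplus_def unowned_def)
  moreover have "?S (\<lambda>c. claim c (c + 1)) \<le> ?S (\<lambda>d. claim (d - 1) d)"
    using sum_lessThan_shifted_le(2)[of "\<lambda>d. claim (d - 1) d" M]
    by (simp add: claim_nonneg claim_def surplus_def unowned_def)
  moreover have "?S (\<lambda>d. claim (d + 1) d + claim (d - 1) d) \<le> ?S surplus"
    by (rule sum_mono) (metis claims_le_surplus add.commute)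
  then have "?S (\<lambda>d. claim (d + 1) d) + ?S (\<lambda>d. claim (d - 1) d) \<le> ?S surplus"
    by (simp add: sum.distrib)
  ultimately have claims: "?S (\<lambda>c. claim c (c - 1)) + ?S (\<lambda>c. claim c (c + 1)) \<le> ?S surplus"
    by linarith
  have "2 * real M \<le> 3 * ?S (\<lambda>c. real (ones c)) + 6 * ?S (\<lambda>c. real (twos c))"
    using charge owners ones twos claims by linarith
  also have "\<dots> = real (3 * (\<Sum>c<M. ones (int c) + 2 * twos (int c)))"
    by (simp add: sum.distrib sum_distrib_left)
  finally show ?thesis
    by linarith
qed

end

definition column_view :: "nat \<Rightarrow> (nat \<times> nat \<Rightarrow> nat) \<Rightarrow> int \<Rightarrow> nat \<Rightarrow> nat" where
  "column_view m f c r = (if 0 \<le> c \<and> c < int m then f (nat c, r) else 0)"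

lemma column_broadcast_column_view:
  assumes dom: "dominating_2lb (prism_V m) prism_E f"
  shows "column_broadcast {0..<3} m (column_view m f)"
proof
  show "column_view m f c r \<le> 2" if "r \<in> {0..<3}" for c r
    using dom that by (auto simp: column_view_def dominating_2lb_def prism_V_eq)
next
  fix c :: int and r :: nat
  assume c: "0 \<le> c" "c < int m" and r: "r \<in> {0..<3}"
    and empty: "\<forall>r'\<in>{0..<3}. column_view m f c r' = 0 \<and> column_view m f (c - 1) r' \<noteq> 2
                              \<and> column_view m f (c + 1) r' \<noteq> 2"
  have "(nat c, r) \<in> prism_V m"
    using c r by (simp add: prism_V_eq)
  then obtain a b where ab: "(a, b) \<in> prism_V m" "hears (prism_V m) prism_E f (nat c, r) (a, b)"
    using dom by (auto simp: dominating_2lb_def)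
  then have heard: "0 < f (a, b)" "nat \<bar>c - int a\<bar> + of_bool (r \<noteq> b) \<le> f (a, b)"
    using gdist_prism[OF \<open>(nat c, r) \<in> prism_V m\<close> ab(1)] c by (auto simp: hears_def prism_dist_def)
  have "f (a, b) \<le> 2" "b < 3" and at_a: "column_view m f (int a) b = f (a, b)"
    using ab(1) dom by (auto simp: dominating_2lb_def prism_V_eq column_view_def)
  then have empty_b: "column_view m f c b = 0"
      "column_view m f (c - 1) b \<noteq> 2" "column_view m f (c + 1) b \<noteq> 2"
    using empty by auto
  have "int a \<noteq> c"
    using at_a empty_b(1) heard(1) by auto
  moreover have "\<bar>c - int a\<bar> \<le> 2"
    using heard(2) \<open>f (a, b) \<le> 2\<close> by linarith
  ultimately consider "int a = c - 1 \<or> int a = c + 1" | "int a = c - 2 \<or> int a = c + 2"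
    by linarith
  then show "column_view m f (c - 1) r = 1 \<or> column_view m f (c + 1) r = 1
             \<or> column_view m f (c - 2) r = 2 \<or> column_view m f (c + 2) r = 2"
  proof cases
    case 1
    then have "f (a, b) = 1"
      using at_a empty_b heard(1) \<open>f (a, b) \<le> 2\<close> by auto
    moreover from 1 have "r = b"
      using heard(2) \<open>f (a, b) = 1\<close> by auto
    ultimately show ?thesis
      using 1 at_a by auto
  next
    case 2
    then have "f (a, b) = 2" "r = b"
      using heard(2) \<open>f (a, b) \<le> 2\<close> by (auto simp: of_bool_def split: if_splits)
    then show ?thesis
      using 2 at_a by auto
  qed
qed (auto simp: column_view_def)

lemma dominating_prism_cost_ge:
  assumes dom: "dominating_2lb (prism_V m) prism_E f"
  shows "2 * m \<le> 3 * bcost (prism_V m) f"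
proof -
  interpret column_broadcast "{0..<3}" m "column_view m f"
    using dom by (rule column_broadcast_column_view)
  have "(\<Sum>r<3. f (c, r)) = ones (int c) + 2 * twos (int c)" if "c < m" for c
  proof -
    have "f (c, r) = of_bool (f (c, r) = 1) + 2 * of_bool (f (c, r) = 2)" if "r < 3" for r
    proof -
      have "f (c, r) \<le> 2"
        using dom \<open>c < m\<close> that by (auto simp: dominating_2lb_def prism_V_eq)
      then show ?thesis
        by (auto simp: le_Suc_eq numeral_2_eq_2)
    qed
    then have "(\<Sum>r<3. f (c, r)) = (\<Sum>r<3. of_bool (f (c, r) = 1) + 2 * of_bool (f (c, r) = 2))"
      by (intro sum.cong) simp_all
    also have "\<dots> = ones (int c) + 2 * twos (int c)"
      unfolding ones_def twos_def using \<open>c < m\<close>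
      by (simp add: column_view_def atLeast0LessThan sum.distrib sum_distrib_left)
    finally show ?thesis .
  qed
  then have "bcost (prism_V m) f = (\<Sum>c<m. ones (int c) + 2 * twos (int c))"
    by (simp add: bcost_prism)
  with cost_lower_bound show ?thesis
    by simp
qed

fun periodic_broadcast :: "nat \<Rightarrow> nat \<times> nat \<Rightarrow> nat" where
  "periodic_broadcast m (c, r) =
     (if r = 0 \<and> c < m then (if c mod 3 = 1 then 2 else if c + 1 = m \<and> c mod 3 = 0 then 1 else 0) else 0)"

lemma periodic_broadcast_dominating: "dominating_2lb (prism_V m) prism_E (periodic_broadcast m)"
  unfolding dominating_2lb_def
proof (intro conjI ballI)
  show "periodic_broadcast m v \<le> 2" for v
    by (cases v) simp
next
  fix u assume u: "u \<in> prism_V m"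
  then obtain c r where cr: "u = (c, r)" "c < m"
    by (auto simp: prism_V_eq)
  have heard: "\<exists>v\<in>prism_V m. hears (prism_V m) prism_E (periodic_broadcast m) u v"
    if "a < m" "0 < periodic_broadcast m (a, 0)" "prism_dist u (a, 0) \<le> periodic_broadcast m (a, 0)" for a
  proof
    show a: "(a, 0) \<in> prism_V m"
      using \<open>a < m\<close> by (simp add: prism_V_eq)
    show "hears (prism_V m) prism_E (periodic_broadcast m) u (a, 0)"
      using that(2,3) gdist_prism[OF u a] by (simp only: hears_def)
  qed
  have "c mod 3 < 3"
    by simp
  then consider "c mod 3 = 1" | "c mod 3 = 0" "c + 1 < m" | "c mod 3 = 0" "c + 1 = m" | "c mod 3 = 2"
    using cr by linarith
  then show "\<exists>v\<in>prism_V m. hears (prism_V m) prism_E (periodic_broadcast m) u v"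
  proof cases
    case 1
    then show ?thesis
      using heard[of c] cr by (simp add: prism_dist_def)
  next
    case 2
    then have "(c + 1) mod 3 = 1"
      by (simp add: mod_Suc)
    then show ?thesis
      using heard[of "c + 1"] cr 2 by (simp add: prism_dist_def)
  next
    case 3
    then show ?thesis
      using heard[of c] cr by (simp add: prism_dist_def)
  next
    case 4
    then obtain k where "c = Suc k" "k mod 3 = 1"
      by (cases c) (auto simp: mod_Suc split: if_splits)
    then show ?thesis
      using heard[of k] cr by (simp add: prism_dist_def)
  qed
qed

lemma sum_every_third: "(\<Sum>c<n. if c mod 3 = 1 then 2 else 0 :: nat) = 2 * ((n + 1) div 3)"
  by (induction n) (auto simp: div_Suc mod_Suc)

lemma periodic_broadcast_cost:
  assumes "1 \<le> m"
  shows "3 * bcost (prism_V m) (periodic_broadcast m) \<le> 2 * m + 2"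
proof -
  obtain n where m: "m = Suc n"
    using assms by (cases m) auto
  have "(\<Sum>r<3. periodic_broadcast m (c, r)) = periodic_broadcast m (c, 0)" for c
    by (simp add: numeral_3_eq_3)
  then have "bcost (prism_V m) (periodic_broadcast m)
               = periodic_broadcast m (n, 0) + (\<Sum>c<n. periodic_broadcast m (c, 0))"
    by (simp add: bcost_prism m)
  also have "(\<Sum>c<n. periodic_broadcast m (c, 0)) = (\<Sum>c<n. if c mod 3 = 1 then 2 else 0)"
    by (rule sum.cong) (auto simp: m)
  also have "\<dots> = 2 * ((n + 1) div 3)"
    by (rule sum_every_third)
  finally have cost: "bcost (prism_V m) (periodic_broadcast m)
                        = periodic_broadcast m (n, 0) + 2 * ((n + 1) div 3)" .
  have div_mod: "3 * ((n + 1) div 3) + (n + 1) mod 3 = n + 1"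
    using div_mult_mod_eq[of "n + 1" 3] by linarith
  have "n mod 3 = 0 \<and> (n + 1) mod 3 = 1 \<or> n mod 3 = 1 \<and> (n + 1) mod 3 = 2
        \<or> n mod 3 = 2 \<and> (n + 1) mod 3 = 0"
    by (auto simp: mod_Suc)
  then show ?thesis
  proof (elim disjE conjE)
    assume "n mod 3 = 0" "(n + 1) mod 3 = 1"
    then have "periodic_broadcast m (n, 0) = 1"
      by (simp add: m)
    with cost div_mod \<open>(n + 1) mod 3 = 1\<close> show ?thesis
      using m by linarith
  next
    assume "n mod 3 = 1" "(n + 1) mod 3 = 2"
    then have "periodic_broadcast m (n, 0) = 2"
      by (simp add: m)
    with cost div_mod \<open>(n + 1) mod 3 = 2\<close> show ?thesis
      using m by linarith
  next
    assume "n mod 3 = 2" "(n + 1) mod 3 = 0"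
    then have "periodic_broadcast m (n, 0) = 0"
      by (simp add: m)
    with cost div_mod \<open>(n + 1) mod 3 = 0\<close> show ?thesis
      using m by linarith
  qed
qed

theorem corollary4p2:
  fixes m :: nat
  assumes "m \<ge> 3"
  shows "int (gamma_b2 (cart_V (path_V m) (cycle_V 3)) (cart_E path_E (cycle_E 3)))
         = ceiling (2 * real m / 3)"
proof -
  obtain g where "dominating_2lb (prism_V m) prism_E g" "bcost (prism_V m) g = gamma_b2 (prism_V m) prism_E"
    using gamma_b2_attained[OF periodic_broadcast_dominating] by blast
  then have lower: "2 * m \<le> 3 * gamma_b2 (prism_V m) prism_E"
    using dominating_prism_cost_ge by metis
  have upper: "3 * gamma_b2 (prism_V m) prism_E \<le> 2 * m + 2"
    using gamma_b2_le[OF periodic_broadcast_dominating, of m] periodic_broadcast_cost[of m] assms by linarith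
  show ?thesis
  proof (rule ceiling_unique[symmetric])
    show "real_of_int (int (gamma_b2 (prism_V m) prism_E)) - 1 < 2 * real m / 3"
      using upper by linarith
    show "2 * real m / 3 \<le> real_of_int (int (gamma_b2 (prism_V m) prism_E))"
      using lower by linarith
  qed
qed

end
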